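(* Let $q$ be a power of $2$ and $k\ge 1$ an integer, and let $S_{2k}=x+x^q+\cdots+x^{q^{2k-1}}\in\mathbb{F}_2[x]$. Let $L\in\mathbb{F}_{q^{3k}}[x]$ be a $2$-linearized polynomial (i.e. $L=\sum_i a_i x^{2^i}$ with $a_i\in\mathbb{F}_{q^{3k}}$) such that (i) $L$ permutes $\mathbb{F}_{q^k}$ (that is, $x\mapsto L(x)$ is a bijection $\mathbb{F}_{q^k}\to\mathbb{F}_{q^k}$), and (ii) $L(x)+L(x)^{q^{2k}}\equiv S_{2k}(x)^4 \pmod{x^{q^{3k}}-x}$. Then $L(x)+S_{2k}(x)^{q^k+3}$ is a permutation polynomial of $\mathbb{F}_{q^{3k}}$.
   Context: $\mathbb{F}_m$ denotes the finite field with $m$ elements. A polynomial $f\in\mathbb{F}_m[x]$ is a permutation polynomial of $\mathbb{F}_m$ if the induced map $x\mapsto f(x)$ is a bijection of $\mathbb{F}_m$. Here $\mathbb{F}_{q^k}\subset\mathbb{F}_{q^{3k}}$ is the subfield of order $q^k$. *)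

theory Defs
  imports "HOL-Computational_Algebra.Polynomial"
begin

definition subfield_of_order :: "nat \<Rightarrow> 'a::field set" where
  "subfield_of_order m = {x. x ^ m = x}"

definition two_linearized :: "'a::comm_ring_1 poly \<Rightarrow> bool" where
  "two_linearized L \<longleftrightarrow> (\<forall>n. coeff L n \<noteq> 0 \<longrightarrow> (\<exists>i. n = 2 ^ i))"

definition permutation_poly :: "'a::field poly \<Rightarrow> bool" where
  "permutation_poly f \<longleftrightarrow> bij (poly f)"

definition trace_poly :: "nat \<Rightarrow> nat \<Rightarrow> 'a::comm_ring_1 poly" where
  "trace_poly q m = (\<Sum>j<m. monom 1 (q ^ j))"

end

theory Submission
  imports Defs
begin

(* Write N = q^k and S = S_{2k}.  In characteristic 2 we have S x = u + u^N with
   u = x + x^q + ... + x^(q^(k-1)), so every value y of S satisfies y + y^N + y^(N^2) = 0,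
   and for such y one computes y^(N+3) + (y^(N+3))^(N^2) = y^4 + y^((N+1)^2).  Together with (ii)
   this gives f + f^(N^2) = S^((N+1)^2) for f = L + S^(N+3).  As N + 1 divides N^3 + 1, the map
   z \<mapsto> z^(N+1) is injective, so f x = f x' forces S (x + x') = 0, i.e. x + x' lies in the
   subfield of order N, where L is injective by (i); hence x = x'. *)

lemma of_nat_card_UNIV_eq_0: "of_nat (card (UNIV :: 'a::{ring_1,finite} set)) = (0 :: 'a)"
proof -
  have "(\<Sum>y\<in>UNIV. y + 1) = (\<Sum>y\<in>(UNIV :: 'a set). y)"
    by (rule sum.reindex_bij_witness[of _ "\<lambda>y. y - 1" "\<lambda>y. y + 1"]) auto
  then show ?thesis
    by (simp add: sum.distrib)
qed

lemma prime_CHAR_field_finite: "prime CHAR('a::{field,finite})"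
  by (simp add: prime_CHAR_semidom finite_imp_CHAR_pos)

lemma CHAR_eq_2_if_card_power_of_2:
  assumes "card (UNIV :: 'a::{field,finite} set) = 2 ^ m"
  shows "CHAR('a) = 2"
proof -
  have "CHAR('a) dvd 2 ^ m"
    using of_nat_card_UNIV_eq_0[where 'a = 'a] assms of_nat_eq_0_iff_char_dvd by metis
  then show ?thesis
    by (metis prime_CHAR_field_finite prime_dvd_power primes_dvd_imp_eq two_is_prime_nat)
qed

lemma power_card_UNIV_eq_self:
  fixes x :: "'a::{field,finite}"
  shows "x ^ card (UNIV :: 'a set) = x"
proof (cases "x = 0")
  case True
  then show ?thesis by (simp add: finite_UNIV_card_ge_0)
next
  case False
  let ?U = "UNIV - {0::'a}"
  have "(\<Prod>y\<in>?U. x * y) = (\<Prod>y\<in>?U. y)"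
    by (rule prod.reindex_bij_witness[of _ "\<lambda>y. y / x" "\<lambda>y. x * y"]) (use False in auto)
  then have "x ^ card ?U = 1"
    by (simp add: prod.distrib)
  moreover have "card (UNIV :: 'a set) = Suc (card ?U)"
    by (simp add: card_Diff_singleton finite_UNIV_card_ge_0 Suc_leI)
  ultimately show ?thesis
    by (metis power_Suc mult_1_right)
qed

lemma power_CHAR_power_add:
  assumes "prime CHAR('a::comm_semiring_1)" "q = CHAR('a) ^ e"
  shows "(x + y :: 'a) ^ q ^ j = x ^ q ^ j + y ^ q ^ j"
  using assms by (intro freshmans_dream'[where n = "e * j"]) (simp_all add: power_mult)

lemma add_self_CHAR_2:
  assumes "CHAR('a::ring_1) = 2"
  shows "x + x = (0 :: 'a)"
  using uminus_CHAR_2[OF assms, of x] by (metis add.right_inverse)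

lemma additive_poly_two_linearized:
  assumes "CHAR('a::comm_ring_1) = 2" "two_linearized L"
  shows "additive (poly (L :: 'a poly))"
proof
  fix x y :: 'a
  have "coeff L i * (x + y) ^ i = coeff L i * x ^ i + coeff L i * y ^ i" for i
  proof (cases "coeff L i = 0")
    case False
    then obtain j where "i = 2 ^ j"
      using assms(2) unfolding two_linearized_def by blast
    then show ?thesis
      using assms(1) by (simp add: freshmans_dream' distrib_left)
  qed simp
  then show "poly L (x + y) = poly L x + poly L y"
    by (simp add: poly_altdef sum.distrib)
qed

lemma poly_eq_0_if_X_power_minus_X_dvd:
  assumes "(monom 1 n - monom 1 1) dvd P" "x ^ n = x"
  shows "poly P (x :: 'a::comm_ring_1) = 0"
  using assms by (auto elim!: dvdE simp: poly_monom)

lemma poly_trace_poly: "poly (trace_poly q m) x = (\<Sum>j<m. x ^ q ^ j)"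
  by (simp add: trace_poly_def poly_sum poly_monom)

lemma additive_poly_trace_poly:
  assumes "prime CHAR('a::comm_ring_1)" "q = CHAR('a) ^ e"
  shows "additive (poly (trace_poly q m) :: 'a \<Rightarrow> 'a)"
  by standard (simp add: poly_trace_poly power_CHAR_power_add[OF assms] sum.distrib)

lemma poly_trace_poly_add:
  assumes "prime CHAR('a::comm_ring_1)" "q = CHAR('a) ^ e"
  shows "poly (trace_poly q (a + b)) x = poly (trace_poly q a) x + poly (trace_poly q b) (x :: 'a) ^ q ^ a"
proof (induction b)
  case 0
  have "q > 0"
    using assms by (simp add: prime_gt_0_nat)
  then show ?case
    by (simp add: poly_trace_poly power_0_left)
next
  case (Suc b)
  have "x ^ q ^ (a + b) = (x ^ q ^ b) ^ q ^ a"
    by (simp add: power_add mult.commute flip: power_mult)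
  with Suc show ?case
    by (simp add: poly_trace_poly power_CHAR_power_add[OF assms] add.assoc)
qed

lemma poly_trace_poly_power:
  assumes "prime CHAR('a::comm_ring_1)" "q = CHAR('a) ^ e"
  shows "poly (trace_poly q m) x ^ q + x = poly (trace_poly q m) x + (x :: 'a) ^ q ^ m"
  using poly_trace_poly_add[OF assms, of 1 m x] poly_trace_poly_add[OF assms, of m 1 x]
  by (simp add: poly_trace_poly add.commute)

lemma trace_poly_root_in_subfield:
  fixes d :: "'a::{field,finite}"
  assumes q: "q = CHAR('a) ^ e" and card: "card (UNIV :: 'a set) = q ^ (3 * k)"
    and root: "poly (trace_poly q (2 * k)) d = 0"
  shows "d \<in> subfield_of_order (q ^ k)"
proof -
  have "q > 0"
    using q by (simp add: prime_CHAR_field_finite prime_gt_0_nat)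
  then have "d = d ^ q ^ (2 * k)"
    using poly_trace_poly_power[OF prime_CHAR_field_finite q, of "2 * k" d] root
    by (simp add: power_0_left)
  then have "d ^ q ^ k = d ^ (q ^ (2 * k) * q ^ k)"
    by (metis power_mult)
  also have "\<dots> = d ^ card (UNIV :: 'a set)"
    by (simp add: card flip: power_add)
  finally show ?thesis
    by (simp add: subfield_of_order_def power_card_UNIV_eq_self)
qed

lemma trace_poly_relative_trace_eq_0:
  fixes x :: "'a::{field,finite}"
  assumes char: "CHAR('a) = 2" and q: "q = 2 ^ e" and card: "card (UNIV :: 'a set) = q ^ (3 * k)"
  defines "y \<equiv> poly (trace_poly q (2 * k)) x"
  shows "y + y ^ q ^ k + y ^ q ^ (2 * k) = 0"
proof -
  have q_CHAR: "q = CHAR('a) ^ e"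
    using char q by simp
  note frobenius = power_CHAR_power_add[OF prime_CHAR_field_finite q_CHAR]
  define u where "u = poly (trace_poly q k) x"
  have y: "y = u + u ^ q ^ k"
    using poly_trace_poly_add[OF prime_CHAR_field_finite q_CHAR, of k k x]
    by (simp add: y_def u_def mult_2)
  have "u ^ q ^ (3 * k) = u"
    using power_card_UNIV_eq_self[of u] card by simp
  then have "y ^ q ^ (2 * k) = u ^ q ^ (2 * k) + u"
    by (simp add: y frobenius flip: power_mult power_add)
  moreover have "y ^ q ^ k = u ^ q ^ k + u ^ q ^ (2 * k)"
    by (simp add: y frobenius mult_2 flip: power_mult power_add)
  ultimately have "y + y ^ q ^ k + y ^ q ^ (2 * k)
      = (u + u ^ q ^ k + u ^ q ^ (2 * k)) + (u + u ^ q ^ k + u ^ q ^ (2 * k))"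
    by (simp add: y algebra_simps)
  then show ?thesis
    by (simp add: add_self_CHAR_2[OF char])
qed

lemma relative_trace_zero_power_identity:
  fixes y :: "'a::field"
  assumes char: "CHAR('a) = 2" and fixed: "y ^ N ^ 3 = y" and trace: "y + y ^ N + y ^ N ^ 2 = 0"
  shows "y ^ (N + 3) + (y ^ (N + 3)) ^ N ^ 2 = y ^ 4 + y ^ (N + 1) ^ 2"
proof -
  define w where "w = y ^ N"
  have "y ^ N ^ 2 + (y + w) = 0"
    using trace by (simp add: w_def add_ac)
  then have conj2: "y ^ N ^ 2 = y + w"
    by (metis minus_unique uminus_CHAR_2[OF char])
  have "(y ^ (N + 3)) ^ N ^ 2 = (y ^ N) ^ N ^ 2 * (y ^ 3) ^ N ^ 2"
    by (simp add: power_add power_mult_distrib)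
  also have "\<dots> = y ^ N ^ 3 * (y ^ N ^ 2) ^ 3"
    by (simp add: power_Suc mult.commute flip: power_mult power_Suc)
  also have "\<dots> = y * (y + w) ^ 3"
    by (simp add: fixed conj2)
  finally have lhs: "y ^ (N + 3) + (y ^ (N + 3)) ^ N ^ 2 = w * y ^ 3 + y * (y + w) ^ 3"
    by (simp add: w_def power_add)
  have "(N + 1) ^ 2 = N ^ 2 + N * 2 + 1"
    by (simp add: power2_eq_square algebra_simps)
  then have "y ^ (N + 1) ^ 2 = y ^ N ^ 2 * w ^ 2 * y"
    by (simp only: w_def power_add power_mult power_one_right)
  then have rhs: "y ^ (N + 1) ^ 2 = (y + w) * w ^ 2 * y"
    by (simp add: conj2)
  have "w * y ^ 3 + y * (y + w) ^ 3
      = (y ^ 4 + (y + w) * w ^ 2 * y) + 2 * (2 * y ^ 3 * w + y ^ 2 * w ^ 2)"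
    by (simp add: algebra_simps power2_eq_square power3_eq_cube eval_nat_numeral)
  also have "(2 :: 'a) = 0"
    using char of_nat_CHAR[where 'a = 'a] by simp
  finally show ?thesis
    unfolding lhs rhs by simp
qed

lemma sum_with_N2_conjugate_eq:
  fixes l y :: "'a::field"
  assumes char: "CHAR('a) = 2" and N: "N = 2 ^ n"
    and fixed: "y ^ N ^ 3 = y" and trace: "y + y ^ N + y ^ N ^ 2 = 0" and l: "l + l ^ N ^ 2 = y ^ 4"
  shows "(l + y ^ (N + 3)) + (l + y ^ (N + 3)) ^ N ^ 2 = (y ^ (N + 1)) ^ (N + 1)"
proof -
  have "(l + y ^ (N + 3)) ^ N ^ 2 = l ^ N ^ 2 + (y ^ (N + 3)) ^ N ^ 2"
    using char N by (intro freshmans_dream'[where n = "n * 2"]) (simp_all add: power_mult)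
  then have "(l + y ^ (N + 3)) + (l + y ^ (N + 3)) ^ N ^ 2
      = (l + l ^ N ^ 2) + (y ^ (N + 3) + (y ^ (N + 3)) ^ N ^ 2)"
    by (simp add: add_ac)
  also have "\<dots> = (y ^ 4 + y ^ 4) + y ^ (N + 1) ^ 2"
    by (simp add: l relative_trace_zero_power_identity[OF char fixed trace] add.assoc)
  also have "\<dots> = (y ^ (N + 1)) ^ (N + 1)"
    by (simp only: add_self_CHAR_2[OF char] add_0 power2_eq_square power_mult)
  finally show ?thesis .
qed

lemma inj_power_if_dvd_card_Suc:
  assumes char: "CHAR('a::{field,finite}) = 2" and "n dvd card (UNIV :: 'a set) + 1"
  shows "inj (\<lambda>x :: 'a. x ^ n)"
proof (rule injI)
  fix a b :: 'a
  assume "a ^ n = b ^ n"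
  moreover obtain m where "card (UNIV :: 'a set) + 1 = n * m"
    using assms(2) by (rule dvdE)
  ultimately have "a ^ (card (UNIV :: 'a set) + 1) = b ^ (card (UNIV :: 'a set) + 1)"
    by (simp add: power_mult)
  then have "a ^ 2 = b ^ 2"
    by (simp add: power_card_UNIV_eq_self power2_eq_square)
  then have "(a + b) ^ 2 = 0"
    using char by (simp add: freshmans_dream add_self_CHAR_2)
  then show "a = b"
    by (simp add: add_eq_0_iff2 uminus_CHAR_2[OF char])
qed

lemma Suc_dvd_power_3_Suc: "(N :: nat) + 1 dvd N ^ 3 + 1"
proof -
  have "int N + 1 dvd int N ^ 3 + 1"
    by (rule dvdI[of _ _ "int N ^ 2 - int N + 1"]) (simp add: algebra_simps power2_eq_square power3_eq_cube)
  then show ?thesis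
    by (simp only: int_dvd_int_iff[symmetric] of_nat_add of_nat_power of_nat_1)
qed

lemma inj_power_Suc_if_card_cube:
  assumes "CHAR('a::{field,finite}) = 2" "card (UNIV :: 'a set) = N ^ 3"
  shows "inj (\<lambda>x :: 'a. x ^ (N + 1))"
  using assms Suc_dvd_power_3_Suc[of N] by (intro inj_power_if_dvd_card_Suc) simp_all

lemma inj_additive_plus_comp:
  fixes L :: "'a::ab_group_add \<Rightarrow> 'a" and S :: "'a \<Rightarrow> 'b::ab_group_add"
  assumes "additive L" "additive S"
    and "inj_on L K" "0 \<in> K" "\<And>d. S d = 0 \<Longrightarrow> d \<in> K"
    and "\<And>x. F (L x + g (S x)) = \<psi> (S x)" "inj \<psi>"
  shows "inj (\<lambda>x. L x + g (S x))"
proof (rule injI)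
  fix x y
  assume eq: "L x + g (S x) = L y + g (S y)"
  then have "\<psi> (S x) = \<psi> (S y)"
    by (metis assms(6))
  then have S_eq: "S x = S y"
    by (rule injD[OF assms(7)])
  then have "x - y \<in> K"
    using assms(5) by (simp add: additive.diff[OF assms(2)])
  moreover have "L (x - y) = L 0"
    using eq S_eq by (simp add: additive.diff[OF assms(1)] additive.zero[OF assms(1)])
  ultimately have "x - y = 0"
    using assms(3,4) by (auto dest: inj_onD)
  then show "x = y"
    by simp
qed

theorem theorem3p1:
  fixes L :: "'a::{field,finite} poly" and q k e :: nat
  assumes q: "q = 2 ^ e" and e: "e \<ge> 1" and k: "k \<ge> 1"
    and card: "card (UNIV :: 'a set) = q ^ (3 * k)"
    and lin: "two_linearized L"
    and perm_sub: "bij_betw (poly L) (subfield_of_order (q ^ k)) (subfield_of_order (q ^ k))"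
    and cong: "(monom 1 (q ^ (3 * k)) - monom 1 1) dvd
                 (L + L ^ (q ^ (2 * k)) - (trace_poly q (2 * k)) ^ 4)"
  shows "permutation_poly (L + (trace_poly q (2 * k)) ^ (q ^ k + 3))"
proof -
  define N where "N = q ^ k"
  define S where "S = (poly (trace_poly q (2 * k)) :: 'a \<Rightarrow> 'a)"
  have char: "CHAR('a) = 2"
    using card by (intro CHAR_eq_2_if_card_power_of_2[where m = "e * (3 * k)"]) (simp add: q power_mult)
  have q_CHAR: "q = CHAR('a) ^ e"
    using char q by simp
  have N_powers: "q ^ (2 * k) = N ^ 2" "q ^ (3 * k) = N ^ 3"
    by (simp_all add: N_def mult.commute flip: power_mult)
  have card_N: "card (UNIV :: 'a set) = N ^ 3"
    using card N_powers by simp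
  have fixed: "x ^ N ^ 3 = x" for x :: 'a
    using power_card_UNIV_eq_self[of x] card_N by simp
  have S_trace: "S x + S x ^ N + S x ^ N ^ 2 = 0" for x
    using trace_poly_relative_trace_eq_0[OF char q card, of x] by (simp add: S_def N_powers flip: N_def)
  have L_cond: "poly L x + poly L x ^ N ^ 2 = S x ^ 4" for x
    using poly_eq_0_if_X_power_minus_X_dvd[OF cong, of x] fixed N_powers by (simp add: S_def poly_power)
  have "inj (\<lambda>x. poly L x + S x ^ (N + 3))"
  proof (rule inj_additive_plus_comp[where S = S and g = "\<lambda>z. z ^ (N + 3)"
        and F = "\<lambda>y. y + y ^ N ^ 2" and \<psi> = "\<lambda>z. (z ^ (N + 1)) ^ (N + 1)"])
    show "additive (poly L)"
      using char lin by (rule additive_poly_two_linearized)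
    show "additive S"
      unfolding S_def using prime_CHAR_field_finite q_CHAR by (rule additive_poly_trace_poly)
    show "inj_on (poly L) (subfield_of_order N)"
      using perm_sub by (simp add: N_def bij_betw_def)
    show "0 \<in> subfield_of_order N"
      using q by (simp add: subfield_of_order_def N_def power_0_left)
    show "d \<in> subfield_of_order N" if "S d = 0" for d
      using trace_poly_root_in_subfield[OF q_CHAR card] that by (simp add: S_def N_def)
    show "(poly L x + S x ^ (N + 3)) + (poly L x + S x ^ (N + 3)) ^ N ^ 2 = (S x ^ (N + 1)) ^ (N + 1)" for x
      using char fixed S_trace L_cond by (intro sum_with_N2_conjugate_eq[where n = "e * k"]) (simp_all add: N_def q power_mult)
    show "inj (\<lambda>z :: 'a. (z ^ (N + 1)) ^ (N + 1))"
      using inj_compose[OF inj_power_Suc_if_card_cube[OF char card_N] inj_power_Suc_if_card_cube[OF char card_N]]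
      by (simp add: comp_def)
  qed
  moreover have "poly (L + trace_poly q (2 * k) ^ (q ^ k + 3)) = (\<lambda>x. poly L x + S x ^ (N + 3))"
    by (rule ext) (simp add: S_def N_def poly_power)
  ultimately show ?thesis
    by (simp add: permutation_poly_def bij_def finite_UNIV_inj_surj)
qed

end
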